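(* Fix an allocation algorithm $A$. $A$ is truthful without money and with verification for CAs with $k$-minded bidders if and only if, for every bidder $i$ and every $\mathbf b_{-i}$, the declaration graph of $A$ for $(i,\mathbf b_{-i})$ has no edge of negative weight.
   Context: Combinatorial auction setting: a set $\mathsf U$ of $m$ goods (single supply) and $n$ bidders. The true type of bidder $i$ is $t_i=(v_i,\mathcal S_i)$, where $\mathcal S_i$ is a collection of $k$ nonempty subsets of $\mathsf U$ (demanded sets) and $v_i:\mathcal S_i\to\mathbb R_{\ge0}$; $v_i$ is extended to all $S\subseteq \mathsf U$ by $v_i(S)=\max\{v_i(S'):S'\in\mathcal S_i,\ S'\subseteq S\}$ ($0$ if no such $S'$; so $v_i(\emptyset)=0$). A declaration of bidder $i$ is a pair $c=(w,\mathcal W)$ of the same form, extended the same way; $D_i$ is the set of possible declarations of $i$. For a declaration $c=(w,\mathcal W)$ and $T\subseteq\mathsf U$, $\sigma(T\mid c)$ denotes an inclusion-maximal set in $\mathcal W\cup\{\emptyset\}$ contained in $T$ with $w(\sigma(T\mid c))=w(T)$. An allocation algorithm $A$ maps a declaration profile $\mathbf b$ to pairwise disjoint sets $A_i(\mathbf b)$ and is exact: $A_i(\mathbf b)\in\mathcal W_i\cup\{\emptyset\}$ where $b_i=(w_i,\mathcal W_i)$. Verification: bidder $i$ with true type $t_i$, facing $\mathbf b_{-i}$, may declare $b_i=(z,\mathcal T)$ only if $z(A_i(b_i,\mathbf b_{-i}))\le v_i(A_i(b_i,\mathbf b_{-i}))$. $A$ is truthful without money and with verification if for all $i$, $\mathbf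 b_{-i}$, all true types $t_i\in D_i$ and all declarations $b_i\in D_i$ permitted by verification, $v_i(A_i(t_i,\mathbf b_{-i}))\ge v_i(A_i(b_i,\mathbf b_{-i}))$. Declaration graph for $(i,\mathbf b_{-i})$: vertex set $D_i$; for $a=(z,\mathcal T)$ and $c=(w,\mathcal W)$ in $D_i$, writing $\sigma(c\mid a)$ for $\sigma(A_i(c,\mathbf b_{-i})\mid a)$, there is an arc $(a,c)$ iff $z(\sigma(c\mid a))\ge w(\sigma(c\mid c))$, and its weight is $z(\sigma(a\mid a))-z(\sigma(c\mid a))$. *)

theory Defs
  imports Complex_Main
begin

text \<open>A declaration (or type) of a bidder: a pair (w, W) of a valuation w and a
collection W of demanded sets. The function w is only meaningful on W; we
normalise it to 0 outside W so that each declaration has a unique encoding.\<close>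
type_synonym 'g decl = "('g set \<Rightarrow> real) \<times> 'g set set"

definition kdecls :: "'g set \<Rightarrow> nat \<Rightarrow> 'g decl set" where
  "kdecls U k = {(w, W). (\<forall>S\<in>W. S \<noteq> {} \<and> S \<subseteq> U) \<and> card W = k \<and>
                         (\<forall>S\<in>W. 0 \<le> w S) \<and> (\<forall>S. S \<notin> W \<longrightarrow> w S = 0)}"

definition val :: "'g decl \<Rightarrow> 'g set \<Rightarrow> real" where
  "val c T = (if {S. S \<in> snd c \<and> S \<subseteq> T} = {} then 0
              else Max (fst c ` {S. S \<in> snd c \<and> S \<subseteq> T}))"

definition sigma :: "'g set \<Rightarrow> 'g decl \<Rightarrow> 'g set" where
  "sigma T c = (SOME S. S \<in> insert {} (snd c) \<and> S \<subseteq> T \<and> val c S = val c T \<and>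
       (\<forall>S'\<in>insert {} (snd c). S \<subseteq> S' \<and> S' \<subseteq> T \<and> val c S' = val c T \<longrightarrow> S' = S))"

definition alloc_alg :: "'g decl set \<Rightarrow> (('b \<Rightarrow> 'g decl) \<Rightarrow> 'b \<Rightarrow> 'g set) \<Rightarrow> bool" where
  "alloc_alg D A = (\<forall>b. (\<forall>j. b j \<in> D) \<longrightarrow>
      (\<forall>i j. i \<noteq> j \<longrightarrow> A b i \<inter> A b j = {}) \<and> (\<forall>i. A b i \<in> insert {} (snd (b i))))"

text \<open>Truthfulness without money and with verification. The profile b stands for
b_{-i} (its i-th component is irrelevant, it is overwritten).\<close>
definition truthful_ver :: "'g decl set \<Rightarrow> (('b \<Rightarrow> 'g decl) \<Rightarrow> 'b \<Rightarrow> 'g set) \<Rightarrow> bool" where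
  "truthful_ver D A = (\<forall>i b. (\<forall>j. j \<noteq> i \<longrightarrow> b j \<in> D) \<longrightarrow>
      (\<forall>t\<in>D. \<forall>c\<in>D.
         val c (A (b(i := c)) i) \<le> val t (A (b(i := c)) i) \<longrightarrow>
         val t (A (b(i := t)) i) \<ge> val t (A (b(i := c)) i)))"

definition sig_dg :: "(('b \<Rightarrow> 'g decl) \<Rightarrow> 'b \<Rightarrow> 'g set) \<Rightarrow> 'b \<Rightarrow> ('b \<Rightarrow> 'g decl)
                       \<Rightarrow> 'g decl \<Rightarrow> 'g decl \<Rightarrow> 'g set" where
  "sig_dg A i b c a = sigma (A (b(i := c)) i) a"

definition dg_arc :: "(('b \<Rightarrow> 'g decl) \<Rightarrow> 'b \<Rightarrow> 'g set) \<Rightarrow> 'b \<Rightarrow> ('b \<Rightarrow> 'g decl)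
                       \<Rightarrow> 'g decl \<Rightarrow> 'g decl \<Rightarrow> bool" where
  "dg_arc A i b a c = (val a (sig_dg A i b c a) \<ge> val c (sig_dg A i b c c))"

definition dg_weight :: "(('b \<Rightarrow> 'g decl) \<Rightarrow> 'b \<Rightarrow> 'g set) \<Rightarrow> 'b \<Rightarrow> ('b \<Rightarrow> 'g decl)
                       \<Rightarrow> 'g decl \<Rightarrow> 'g decl \<Rightarrow> real" where
  "dg_weight A i b a c = val a (sig_dg A i b a a) - val a (sig_dg A i b c a)"

definition no_negative_arc :: "'g decl set \<Rightarrow> (('b \<Rightarrow> 'g decl) \<Rightarrow> 'b \<Rightarrow> 'g set) \<Rightarrow> 'b
                       \<Rightarrow> ('b \<Rightarrow> 'g decl) \<Rightarrow> bool" where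
  "no_negative_arc D A i b = (\<forall>a\<in>D. \<forall>c\<in>D. dg_arc A i b a c \<longrightarrow> dg_weight A i b a c \<ge> 0)"

end

theory Submission
  imports Defs
begin

text \<open>Both conditions compare the same numbers: the defining property of \<open>sigma\<close>
gives \<open>val a (sigma T a) = val a T\<close>, so an arc \<open>(a, c)\<close> exists exactly when
declaring \<open>c\<close> is permitted by verification for true type \<open>a\<close>, and its weight is the
utility that \<open>a\<close> gains by declaring truthfully instead of \<open>c\<close>.\<close>

lemma val_eq_0_if_no_subset:
  assumes "{S. S \<in> snd a \<and> S \<subseteq> T} = {}"
  shows "val a T = 0"
  using assms by (simp add: val_def)

lemma val_ge_fst:
  assumes "finite (snd a)" "S \<in> snd a" "S \<subseteq> T"
  shows "fst a S \<le> val a T"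
proof -
  have "fst a S \<le> Max (fst a ` {X. X \<in> snd a \<and> X \<subseteq> T})"
    using assms by (intro Max_ge) auto
  then show ?thesis
    using assms(2,3) by (auto simp: val_def)
qed

lemma val_attained_fst:
  assumes "finite (snd a)" "{X. X \<in> snd a \<and> X \<subseteq> T} \<noteq> {}"
  obtains S where "S \<in> snd a" "S \<subseteq> T" "fst a S = val a T"
proof -
  have "val a T = Max (fst a ` {X. X \<in> snd a \<and> X \<subseteq> T})"
    unfolding val_def using assms(2) by (rule if_not_P)
  also have "\<dots> \<in> fst a ` {X. X \<in> snd a \<and> X \<subseteq> T}"
    using assms by (intro Max_in) auto
  finally show ?thesis
    using that by force
qed

lemma val_nonneg:
  assumes "finite (snd a)" "\<forall>X. 0 \<le> fst a X"
  shows "0 \<le> val a T"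
proof (cases "{X. X \<in> snd a \<and> X \<subseteq> T} = {}")
  case False
  then obtain S where "fst a S = val a T"
    using val_attained_fst[OF assms(1)] by blast
  moreover have "0 \<le> fst a S"
    using assms(2) by blast
  ultimately show ?thesis
    by simp
qed (simp add: val_eq_0_if_no_subset)

lemma val_mono:
  assumes "finite (snd a)" "\<forall>X. 0 \<le> fst a X" "S \<subseteq> T"
  shows "val a S \<le> val a T"
proof (cases "{X. X \<in> snd a \<and> X \<subseteq> S} = {}")
  case True
  then have "val a S = 0"
    by (rule val_eq_0_if_no_subset)
  then show ?thesis
    using val_nonneg[OF assms(1,2)] by simp
next
  case False
  then obtain S' where "S' \<in> snd a" "S' \<subseteq> S" "fst a S' = val a S"
    using val_attained_fst[OF assms(1)] by blast
  moreover have "S' \<subseteq> T"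
    using \<open>S' \<subseteq> S\<close> assms(3) by blast
  ultimately show ?thesis
    using val_ge_fst[OF assms(1)] by metis
qed

lemma val_attained:
  assumes "finite (snd a)" "\<forall>X. 0 \<le> fst a X"
  obtains S where "S \<in> insert {} (snd a)" "S \<subseteq> T" "val a S = val a T"
proof (cases "{X. X \<in> snd a \<and> X \<subseteq> T} = {}")
  case True
  moreover have "{X. X \<in> snd a \<and> X \<subseteq> {}} = {}"
    using True by blast
  ultimately have "val a {} = val a T"
    by (simp add: val_eq_0_if_no_subset)
  then show ?thesis using that by blast
next
  case False
  then obtain S where S: "S \<in> snd a" "S \<subseteq> T" "fst a S = val a T"
    using val_attained_fst assms(1) by blast
  have "fst a S \<le> val a S" using val_ge_fst assms(1) S(1) by blast
  moreover have "val a S \<le> val a T" using val_mono assms S(2) by blast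
  ultimately have "val a S = val a T" using S(3) by linarith
  then show ?thesis using that S by blast
qed

lemma val_sigma:
  assumes "finite (snd a)" "\<forall>X. 0 \<le> fst a X"
  shows "val a (sigma T a) = val a T"
proof -
  define C where "C = {S. S \<in> insert {} (snd a) \<and> S \<subseteq> T \<and> val a S = val a T}"
  have "finite C"
    unfolding C_def using assms(1) by simp
  moreover obtain S0 where "S0 \<in> insert {} (snd a)" "S0 \<subseteq> T" "val a S0 = val a T"
    using val_attained[OF assms] .
  then have "C \<noteq> {}"
    unfolding C_def by blast
  ultimately obtain S where S: "S \<in> C" and maximal: "\<forall>S'\<in>C. S \<subseteq> S' \<longrightarrow> S' = S"
    using finite_has_maximal[of C] by blast
  have "S \<in> insert {} (snd a) \<and> S \<subseteq> T \<and> val a S = val a T \<and>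
      (\<forall>S'\<in>insert {} (snd a). S \<subseteq> S' \<and> S' \<subseteq> T \<and> val a S' = val a T \<longrightarrow> S' = S)"
    using S maximal by (simp add: C_def)
  then show ?thesis
    unfolding sigma_def by (rule someI2) simp
qed

lemma kdecls_finite_nonneg:
  assumes "finite U" "a \<in> kdecls U k"
  shows "finite (snd a)" "\<forall>X. 0 \<le> fst a X"
proof -
  have "snd a \<subseteq> Pow U" "\<forall>X. 0 \<le> fst a X"
    using assms(2) unfolding kdecls_def by (auto simp: case_prod_beta)
  then show "finite (snd a)" "\<forall>X. 0 \<le> fst a X"
    using assms(1) by (auto intro: finite_subset)
qed

lemma val_sigma_kdecls:
  assumes "finite U" "a \<in> kdecls U k"
  shows "val a (sigma T a) = val a T"
  using val_sigma kdecls_finite_nonneg[OF assms] by blast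

theorem proposition1:
  fixes U :: "'g set" and k :: nat
    and A :: "('b::finite \<Rightarrow> 'g decl) \<Rightarrow> 'b \<Rightarrow> 'g set"
  assumes "finite U"
    and "alloc_alg (kdecls U k) A"
  shows "truthful_ver (kdecls U k) A \<longleftrightarrow>
         (\<forall>i b. (\<forall>j. j \<noteq> i \<longrightarrow> b j \<in> kdecls U k) \<longrightarrow> no_negative_arc (kdecls U k) A i b)"
proof -
  have arc: "dg_arc A i b a c \<longleftrightarrow> val c (A (b(i := c)) i) \<le> val a (A (b(i := c)) i)"
    and weight: "dg_weight A i b a c = val a (A (b(i := a)) i) - val a (A (b(i := c)) i)"
    if "a \<in> kdecls U k" "c \<in> kdecls U k" for i b a c
    using that val_sigma_kdecls[OF assms(1)]
    by (simp_all add: dg_arc_def dg_weight_def sig_dg_def)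
  show ?thesis
    unfolding truthful_ver_def no_negative_arc_def by (simp add: arc weight)
qed

end
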